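(* There are constants $C_7$ and $D$ (depending only on $r$) and, for each $\eta>0$, a constant $\varepsilon_5(\eta)>0$ such that for every $\eta>0$, all large enough $n$, every $m\le\varepsilon_5(\eta)n$ and every $U\subset V_n$ with $|U|=m$, $$\mathbb P\big(|\partial U|\le(r-2-\eta)|U|\big)\le C_7\exp\big[-(1+\eta/4)\,m\log(n/m)+D m\big].$$
   Context: Fix an integer $r\ge3$, let $V_n=\{1,\dots,n\}$ with $rn$ even, and let $\mathbb P$ be the law of the random multigraph $G_n$ on $V_n$ obtained by giving each vertex $r$ half-edges and pairing all $rn$ half-edges uniformly at random. Write $y\sim x$ if $y$ and $x$ are joined by an edge of $G_n$. For $U\subset V_n$, $\partial U:=\{y\in U^c: y\sim x\text{ for some }x\in U\}$. *)

theory Defs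
  imports "HOL-Probability.Probability"
begin

text \<open>Configuration model: vertex set {1..n}, each vertex x carries r half-edges (x,i), i<r.\<close>
definition half_edges :: "nat \<Rightarrow> nat \<Rightarrow> (nat \<times> nat) set" where
  "half_edges n r = {1..n} \<times> {..<r}"

text \<open>Perfect matchings of the half-edges, encoded as fixed-point-free involutions.\<close>
definition pairings :: "nat \<Rightarrow> nat \<Rightarrow> ((nat \<times> nat) \<Rightarrow> (nat \<times> nat)) set" where
  "pairings n r = {f \<in> half_edges n r \<rightarrow>\<^sub>E half_edges n r.
                     \<forall>h \<in> half_edges n r. f (f h) = h \<and> f h \<noteq> h}"

definition adj :: "nat \<Rightarrow> ((nat \<times> nat) \<Rightarrow> (nat \<times> nat)) \<Rightarrow> nat \<Rightarrow> nat \<Rightarrow> bool" where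
  "adj r f y x \<longleftrightarrow> (\<exists>i<r. \<exists>j<r. f (x, i) = (y, j))"

definition boundary :: "nat \<Rightarrow> nat \<Rightarrow> ((nat \<times> nat) \<Rightarrow> (nat \<times> nat)) \<Rightarrow> nat set \<Rightarrow> nat set" where
  "boundary n r f U = {y \<in> {1..n} - U. \<exists>x \<in> U. adj r f y x}"

definition config_model :: "nat \<Rightarrow> nat \<Rightarrow> ((nat \<times> nat) \<Rightarrow> (nat \<times> nat)) pmf" where
  "config_model n r = pmf_of_set (pairings n r)"

end

theory Submission
  imports Defs
begin

text \<open>Let \<open>X\<close> be the \<open>rm\<close> half-edges at \<open>U\<close>. On \<open>X\<close>, a pairing with \<open>|\<partial>U| \<le> s\<close> is
  determined by the set \<open>I \<subseteq> X\<close> of half-edges paired inside \<open>X\<close> together with their matching,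
  a set \<open>T\<close> of at most \<open>s\<close> vertices outside \<open>U\<close>, and the partners at \<open>T\<close> of the
  \<open>a = |X - I|\<close> other half-edges. Prescribing these fixes \<open>(rm + a)/2\<close> pairs, each costing a
  factor \<open>(rn - 2rm)\<^sup>-\<^sup>1\<close> in a uniform pairing. As \<open>a \<ge> |T|\<close>, the \<open>n\<^bsup>|T|\<^esup>\<close> choices of
  \<open>T\<close> leave at least \<open>(rm - |T|)/2 \<ge> (1 + \<eta>/2)m\<close> of these factors, so the union bound gives
  \<open>(m/n)\<^bsup>(1 + \<eta>/2)m\<^esup> e\<^bsup>O(m)\<^esup>\<close>.\<close>

definition matchings :: "'a set \<Rightarrow> ('a \<Rightarrow> 'a) set" where
  "matchings S = {f \<in> S \<rightarrow>\<^sub>E S. \<forall>x \<in> S. f (f x) = x \<and> f x \<noteq> x}"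

lemma matchingsD: "f \<in> matchings S \<Longrightarrow> x \<in> S \<Longrightarrow> f x \<in> S \<and> f (f x) = x \<and> f x \<noteq> x"
  unfolding matchings_def by auto

lemma matchings_undefined: "f \<in> matchings S \<Longrightarrow> x \<notin> S \<Longrightarrow> f x = undefined"
  unfolding matchings_def by auto

lemma finite_matchings: "finite S \<Longrightarrow> finite (matchings S)"
  unfolding matchings_def by (rule finite_subset[of _ "S \<rightarrow>\<^sub>E S"]) (auto intro: finite_PiE)

lemma restrict_matchings_Diff:
  assumes f: "f \<in> matchings S" and "D \<subseteq> S" and closed: "\<And>x. x \<in> D \<Longrightarrow> f x \<in> D"
  shows "restrict f (S - D) \<in> matchings (S - D)"
proof -
  have "f y \<in> S - D" if "y \<in> S - D" for y
    using matchingsD[OF f, of y] closed[of "f y"] that by auto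
  then show ?thesis using matchingsD[OF f] unfolding matchings_def by auto
qed

lemma matchings_extend:
  assumes g: "g \<in> matchings (S - D)" and "D \<subseteq> S"
    and M: "\<And>x. x \<in> D \<Longrightarrow> M x \<in> D \<and> M (M x) = x \<and> M x \<noteq> x"
  shows "(\<lambda>x. if x \<in> D then M x else g x) \<in> matchings S"
  using assms matchingsD[OF g] matchings_undefined[OF g]
  unfolding matchings_def by (auto simp: PiE_iff extensional_def)

lemma card_matchings_fixing:
  assumes "D \<subseteq> S" and M: "\<And>x. x \<in> D \<Longrightarrow> M x \<in> D \<and> M (M x) = x \<and> M x \<noteq> x"
  shows "card {f \<in> matchings S. \<forall>x\<in>D. f x = M x} = card (matchings (S - D))"
proof (rule bij_betw_same_card[of "\<lambda>f. restrict f (S - D)"],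
       rule bij_betw_byWitness[where f' = "\<lambda>g x. if x \<in> D then M x else g x"])
  show "\<forall>f\<in>{f \<in> matchings S. \<forall>x\<in>D. f x = M x}. (\<lambda>x. if x \<in> D then M x else restrict f (S - D) x) = f"
    using assms by (auto simp: fun_eq_iff matchings_undefined)
  show "\<forall>g\<in>matchings (S - D). restrict (\<lambda>x. if x \<in> D then M x else g x) (S - D) = g"
    by (auto simp: fun_eq_iff matchings_undefined)
  show "(\<lambda>f. restrict f (S - D)) ` {f \<in> matchings S. \<forall>x\<in>D. f x = M x} \<subseteq> matchings (S - D)"
    using assms by (auto intro!: restrict_matchings_Diff)
  show "(\<lambda>g x. if x \<in> D then M x else g x) ` matchings (S - D) \<subseteq> {f \<in> matchings S. \<forall>x\<in>D. f x = M x}"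
    using assms by (auto intro!: matchings_extend)
qed

lemma card_matchings_with_pair:
  assumes "a \<in> S" "b \<in> S" "a \<noteq> b"
  shows "card {f \<in> matchings S. f a = b} = card (matchings (S - {a, b}))"
proof -
  let ?M = "\<lambda>x. if x = a then b else a"
  have "{f \<in> matchings S. f a = b} = {f \<in> matchings S. \<forall>x\<in>{a,b}. f x = ?M x}"
    using assms matchingsD by fastforce
  also have "card \<dots> = card (matchings (S - {a, b}))"
    using assms by (intro card_matchings_fixing) auto
  finally show ?thesis .
qed

fun num_matchings :: "nat \<Rightarrow> nat" where
  "num_matchings 0 = 1"
| "num_matchings (Suc 0) = 0"
| "num_matchings (Suc (Suc k)) = Suc k * num_matchings k"

lemma num_matchings_odd: "odd k \<Longrightarrow> num_matchings k = 0"
  by (induction k rule: num_matchings.induct) auto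

lemma num_matchings_pos: "even k \<Longrightarrow> 0 < num_matchings k"
  by (induction k rule: num_matchings.induct) auto

lemma card_matchings: "finite S \<Longrightarrow> card (matchings S) = num_matchings (card S)"
proof (induction "card S" arbitrary: S rule: less_induct)
  case less
  consider "S = {}" | a where "S = {a}" | a b where "a \<in> S" "b \<in> S" "a \<noteq> b"
    by (metis is_singletonI' is_singleton_the_elem)
  then show ?case
  proof cases
    case 1
    then have "matchings S = {\<lambda>x. undefined}" unfolding matchings_def by auto
    then show ?thesis using 1 by simp
  next
    case 2
    then have "matchings S = {}" unfolding matchings_def by auto
    then show ?thesis using 2 by simp
  next
    case (3 a a')
    have "card {a, a'} \<le> card S" using 3 less.prems by (intro card_mono) auto
    then obtain k where k: "card S = Suc (Suc k)"
      using 3 by (metis card_2_iff add_2_eq_Suc' le_add_diff_inverse2 numeral_2_eq_2)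
    have "matchings S = (\<Union>b\<in>S - {a}. {f \<in> matchings S. f a = b})"
      using 3 matchingsD by fastforce
    then have "card (matchings S) = card (\<Union>b\<in>S - {a}. {f \<in> matchings S. f a = b})"
      by (rule arg_cong)
    also have "\<dots> = (\<Sum>b\<in>S - {a}. card {f \<in> matchings S. f a = b})"
      using less.prems finite_matchings[OF less.prems] by (intro card_UN_disjoint) auto
    also have "\<dots> = (\<Sum>b\<in>S - {a}. num_matchings k)"
    proof (intro sum.cong refl)
      fix b assume b: "b \<in> S - {a}"
      have "card (S - {a, b}) = k" using 3 b k less.prems by (auto simp: card_Diff_subset)
      moreover have "card {f \<in> matchings S. f a = b} = card (matchings (S - {a, b}))"
        using 3 b by (intro card_matchings_with_pair) auto
      ultimately show "card {f \<in> matchings S. f a = b} = num_matchings k"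
        using k less by simp
    qed
    finally show ?thesis using 3 k less.prems by simp
  qed
qed

lemma card_matchings_agreeing:
  assumes fin: "finite S" and XS: "X \<subseteq> S" and f0: "f0 \<in> matchings S"
  shows "card {f \<in> matchings S. \<forall>x\<in>X. f x = f0 x} = num_matchings (card S - card (X \<union> f0 ` X))"
proof -
  let ?D = "X \<union> f0 ` X"
  have DS: "?D \<subseteq> S" using XS matchingsD[OF f0] by auto
  have "f (f0 x) = f0 (f0 x)" if "f \<in> matchings S" "\<forall>x\<in>X. f x = f0 x" "x \<in> X" for f x
    using that matchingsD[of f S x] matchingsD[OF f0, of x] XS by auto
  then have "{f \<in> matchings S. \<forall>x\<in>X. f x = f0 x} = {f \<in> matchings S. \<forall>x\<in>?D. f x = f0 x}"
    by blast
  also have "card \<dots> = card (matchings (S - ?D))"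
    using DS matchingsD[OF f0] by (intro card_matchings_fixing) auto
  also have "\<dots> = num_matchings (card S - card ?D)"
    using fin DS card_Diff_subset[OF finite_subset[OF DS fin] DS] by (simp add: card_matchings)
  finally show ?thesis .
qed

lemma num_matchings_mult_power_le: "num_matchings k * k ^ j \<le> num_matchings (k + 2 * j)"
proof (induction j)
  case (Suc j)
  have "num_matchings k * k ^ Suc j = k * (num_matchings k * k ^ j)" by simp
  also have "\<dots> \<le> Suc (k + 2 * j) * num_matchings (k + 2 * j)"
    using Suc by (intro mult_mono) auto
  also have "\<dots> = num_matchings (k + 2 * Suc j)"
    by (simp add: numeral_2_eq_2)
  finally show ?case .
qed simp

lemma num_matchings_le_power: "num_matchings (2 * b) \<le> (2 * b) ^ b"
proof (induction b)
  case (Suc b)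
  have "(2 * b) ^ b \<le> (2 * Suc b) ^ b" by (rule power_mono) auto
  then have "num_matchings (2 * b) \<le> (2 * Suc b) ^ b" using Suc by linarith
  then have "Suc (2 * b) * num_matchings (2 * b) \<le> (2 * Suc b) * (2 * Suc b) ^ b"
    by (intro mult_mono) auto
  then show ?case by (simp add: numeral_2_eq_2)
qed simp

lemma num_matchings_diff_le:
  assumes "even s" "d \<le> c" "c < s"
  shows "real (num_matchings (s - d)) \<le> real (num_matchings s) * (1 / (real s - real c)) ^ (d div 2)"
proof (cases "even d")
  case True
  then obtain j where d: "d = 2 * j" by blast
  have "num_matchings (s - d) * (s - d) ^ j \<le> num_matchings (s - d + 2 * j)"
    by (rule num_matchings_mult_power_le)
  then have "real (num_matchings (s - d)) * real (s - d) ^ j \<le> real (num_matchings s)"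
    using assms d by (metis le_add_diff_inverse2 order.strict_implies_order order.trans of_nat_le_iff of_nat_mult of_nat_power)
  moreover have "0 < real s - real c" "real s - real c \<le> real (s - d)"
    using assms by simp_all
  ultimately have "real (num_matchings (s - d)) * (real s - real c) ^ j \<le> real (num_matchings s)"
    by (smt (verit, best) mult_left_mono of_nat_0_le_iff power_mono)
  then show ?thesis
    using \<open>0 < real s - real c\<close> d by (simp add: field_simps)
next
  case False
  then show ?thesis using assms by (simp add: num_matchings_odd)
qed

lemma inverse_gap_le:
  fixes n m r :: nat
  assumes "1 \<le> m" "4 * m \<le> n" "1 \<le> r"
  shows "0 \<le> 1 / (real (n * r) - 2 * real (m * r))"
    and "1 / (real (n * r) - 2 * real (m * r)) \<le> 2 / (real r * real n)"
proof -
  have "real (4 * m) * real r \<le> real n * real r"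
    using assms by (intro mult_right_mono) simp_all
  then have gap: "real r * real n / 2 \<le> real (n * r) - 2 * real (m * r)" by simp
  moreover have pos: "0 < real r * real n / 2" using assms by simp
  ultimately have gap_pos: "0 < real (n * r) - 2 * real (m * r)" by linarith
  then show "0 \<le> 1 / (real (n * r) - 2 * real (m * r))" by simp
  have "1 / (real (n * r) - 2 * real (m * r)) \<le> 1 / (real r * real n / 2)"
    using gap pos gap_pos by (intro divide_left_mono mult_pos_pos) simp_all
  then show "1 / (real (n * r) - 2 * real (m * r)) \<le> 2 / (real r * real n)" by simp
qed

lemma binomial_mult_pow_le: "real (n choose t) * real t ^ t \<le> real n ^ t * exp (real t)"
proof -
  have "(\<lambda>k. real t ^ k / fact k) sums exp (real t)"
    using exp_converges[of "real t"] by (simp add: divide_inverse_commute scaleR_conv_of_real)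
  then have "(\<Sum>k\<in>{t}. real t ^ k / fact k) \<le> exp (real t)"
    by (intro sum_le_suminf[THEN order_trans]) (auto simp: sums_iff)
  then have "real t ^ t \<le> fact t * exp (real t)" by (simp add: field_simps)
  then have "real (n choose t) * real t ^ t \<le> (real (n choose t) * fact t) * exp (real t)"
    by (simp add: mult_left_mono mult.assoc)
  also have "\<dots> \<le> real n ^ t * exp (real t)"
  proof (rule mult_right_mono)
    have "real ((n choose t) * fact t) \<le> real (n ^ t)" by (rule of_nat_mono[OF binomial_fact_pow])
    then show "real (n choose t) * fact t \<le> real n ^ t" by simp
  qed simp
  finally show ?thesis .
qed

lemma code_weight_le_power:
  fixes n m r a b t :: nat
  assumes m: "1 \<le> m" and mn: "4 * m \<le> n" and r: "1 \<le> r" and ab: "2 * b + a = m * r"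
    and ta: "t \<le> a"
  shows "real (n choose t) * real (num_matchings (2 * b)) * (real t * real r) ^ a
           * (1 / (real (n * r) - 2 * real (m * r))) ^ ((m * r + a) div 2)
         \<le> (2 * exp 1 * real r) ^ (m * r) * (real m / real n) ^ (a + b - t)"
proof -
  obtain d where d: "a = t + d" using ta le_Suc_ex by blast
  define k where "k = b + d"
  have np: "real n > 0" and rp: "real r > 0" and mp: "real m > 0" using m mn r by simp_all
  have t_le: "real t \<le> real m * real r"
    using ta ab by (metis le_add2 le_trans of_nat_le_iff of_nat_mult)
  have "(m * r + a) div 2 = a + b" using ab by simp
  moreover have "real (num_matchings (2 * b)) \<le> (real m * real r) ^ b"
  proof -
    have "num_matchings (2 * b) \<le> (m * r) ^ b"
      using num_matchings_le_power[of b] power_mono[of "2 * b" "m * r" b] ab by simp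
    then show ?thesis by (metis of_nat_le_iff of_nat_mult of_nat_power)
  qed
  moreover have "real t ^ a \<le> real t ^ t * (real m * real r) ^ d"
    using t_le unfolding d power_add by (intro mult_left_mono power_mono) simp_all
  ultimately have "real (n choose t) * real (num_matchings (2 * b)) * (real t * real r) ^ a
           * (1 / (real (n * r) - 2 * real (m * r))) ^ ((m * r + a) div 2)
      \<le> real (n choose t) * (real m * real r) ^ b * (real t ^ t * (real m * real r) ^ d * real r ^ a)
           * (2 / (real r * real n)) ^ (a + b)"
    using power_mono[OF inverse_gap_le(2)[OF m mn r] inverse_gap_le(1)[OF m mn r], of "a + b"]
      inverse_gap_le(1)[OF m mn r]
    unfolding power_mult_distrib by (intro mult_mono) simp_all
  also have "\<dots> = (real (n choose t) * real t ^ t / real n ^ t)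
      * (2 ^ (a + b) * real r ^ d) * (real m / real n) ^ k"
    using np rp unfolding k_def d by (simp add: power_add field_simps)
  also have "\<dots> \<le> exp (real t) * (2 ^ (a + b) * real r ^ d) * (real m / real n) ^ k"
    using binomial_mult_pow_le[of n t] np by (intro mult_right_mono) (simp_all add: divide_le_eq mult.commute)
  also have "\<dots> \<le> exp (real (m * r)) * (2 ^ (m * r) * real r ^ (m * r)) * (real m / real n) ^ k"
    using ab r d t_le by (intro mult_right_mono mult_mono power_increasing) simp_all
  also have "\<dots> = (2 * exp 1 * real r) ^ (m * r) * (real m / real n) ^ (a + b - t)"
    unfolding k_def d by (simp add: power_mult_distrib exp_of_nat_mult[symmetric] mult_ac add.commute)
  finally show ?thesis .
qed

lemma code_weight_le:
  fixes n m r a b t :: nat and \<eta> :: real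
  assumes m: "1 \<le> m" and mn: "4 * m \<le> n" and r: "1 \<le> r" and ab: "2 * b + a = m * r"
    and ta: "t \<le> a" and ts: "real t \<le> (real r - 2 - \<eta>) * real m"
  shows "real (n choose t) * real (num_matchings (2 * b)) * (real t * real r) ^ a
           * (1 / (real (n * r) - 2 * real (m * r))) ^ ((m * r + a) div 2)
         \<le> (2 * exp 1 * real r) ^ (m * r) * (real m / real n) powr ((1 + \<eta> / 2) * real m)"
proof -
  have "real a + 2 * real b = real m * real r" "real t \<le> real a"
    using ab ta by (metis of_nat_add of_nat_mult of_nat_numeral add.commute, simp)
  then have "(1 + \<eta> / 2) * real m \<le> real (a + b - t)"
    using ta ts by (simp add: algebra_simps)
  then have "(real m / real n) ^ (a + b - t) \<le> (real m / real n) powr ((1 + \<eta> / 2) * real m)"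
    using m mn by (simp add: powr_realpow[symmetric] powr_mono')
  then show ?thesis
    using code_weight_le_power[OF m mn r ab ta] by (simp add: mult_left_mono order_trans)
qed

lemma union_bound_le_exp:
  fixes n m r :: nat and \<eta> :: real
  assumes m: "1 \<le> m" and mn: "m \<le> n" and r: "1 \<le> r" and eta: "\<eta> \<ge> 0"
  shows "2 ^ (m * r) * real (m * r + 1) * ((2 * exp 1 * real r) ^ (m * r) * (real m / real n) powr ((1 + \<eta> / 2) * real m))
    \<le> exp (- (1 + \<eta> / 4) * real m * ln (real n / real m) + (real r * (2 + ln (4 * real r))) * real m)"
proof -
  have "0 \<le> real m * ln (real n / real m)" using m mn by simp
  then have "(1 + \<eta> / 4) * (real m * ln (real n / real m)) \<le> (1 + \<eta> / 2) * (real m * ln (real n / real m))"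
    using eta by (intro mult_right_mono) simp_all
  moreover have "(real m / real n) powr ((1 + \<eta> / 2) * real m)
      = exp (- ((1 + \<eta> / 2) * (real m * ln (real n / real m))))"
  proof -
    have "ln (real m / real n) = - ln (real n / real m)" using m mn by (simp add: ln_div)
    then show ?thesis using m mn by (simp add: powr_def)
  qed
  ultimately have powr_le: "(real m / real n) powr ((1 + \<eta> / 2) * real m)
      \<le> exp (- (1 + \<eta> / 4) * real m * ln (real n / real m))"
    by (simp add: algebra_simps)
  have prefactor_le: "2 ^ (m * r) * real (m * r + 1) * (2 * exp 1 * real r) ^ (m * r)
      \<le> exp (real r * (2 + ln (4 * real r)) * real m)"
  proof -
    have "(2::real) ^ (m * r) * (2 * exp 1 * real r) ^ (m * r) = exp (1 + ln (4 * real r)) ^ (m * r)"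
      using r by (simp add: exp_add power_mult_distrib[symmetric] mult_ac)
    also have "\<dots> = exp (real (m * r) * (1 + ln (4 * real r)))" by (rule exp_of_nat_mult[symmetric])
    finally have "2 ^ (m * r) * real (m * r + 1) * (2 * exp 1 * real r) ^ (m * r)
        \<le> exp (real (m * r) * (1 + ln (4 * real r))) * exp (real (m * r))"
      using exp_ge_add_one_self[of "real (m * r)"] by (simp add: mult_ac mult_left_mono)
    also have "\<dots> = exp (real r * (2 + ln (4 * real r)) * real m)"
      by (simp add: exp_add[symmetric] algebra_simps)
    finally show ?thesis .
  qed
  have "2 ^ (m * r) * real (m * r + 1) * ((2 * exp 1 * real r) ^ (m * r) * (real m / real n) powr ((1 + \<eta> / 2) * real m))
      = (2 ^ (m * r) * real (m * r + 1) * (2 * exp 1 * real r) ^ (m * r)) * (real m / real n) powr ((1 + \<eta> / 2) * real m)"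
    by (simp only: mult.assoc)
  also have "\<dots> \<le> exp (real r * (2 + ln (4 * real r)) * real m) * exp (- (1 + \<eta> / 4) * real m * ln (real n / real m))"
    using prefactor_le powr_le by (intro mult_mono) simp_all
  finally show ?thesis by (simp add: exp_add add.commute)
qed

lemma pairings_eq_matchings: "pairings n r = matchings (half_edges n r)"
  unfolding pairings_def matchings_def by simp

lemma card_half_edges: "card (half_edges n r) = n * r"
  unfolding half_edges_def by (simp add: card_cartesian_product)

definition half_edges_at :: "nat \<Rightarrow> nat set \<Rightarrow> (nat \<times> nat) set" where
  "half_edges_at r U = U \<times> {..<r}"

lemma finite_half_edges_at: "finite U \<Longrightarrow> finite (half_edges_at r U)"
  unfolding half_edges_at_def by simp

lemma card_half_edges_at: "finite U \<Longrightarrow> card (half_edges_at r U) = card U * r"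
  unfolding half_edges_at_def by (simp add: card_cartesian_product)

lemma half_edges_at_subset: "U \<subseteq> {1..n} \<Longrightarrow> half_edges_at r U \<subseteq> half_edges n r"
  unfolding half_edges_at_def half_edges_def by auto

definition boundary_candidates :: "nat \<Rightarrow> nat \<Rightarrow> nat set \<Rightarrow> real \<Rightarrow> (nat \<times> nat) set \<Rightarrow> nat set set" where
  "boundary_candidates n r U s I =
     {T. T \<subseteq> {1..n} - U \<and> card T \<le> card (half_edges_at r U - I) \<and> real (card T) \<le> s}"

text \<open>A code \<open>((I, T), (p, h))\<close> describes a pairing on the half-edges at \<open>U\<close>: those in \<open>I\<close>
  are matched among themselves by \<open>p\<close>, the others are sent by \<open>h\<close> to half-edges at the
  boundary vertices \<open>T\<close>.\<close>

definition codes :: "nat \<Rightarrow> nat \<Rightarrow> nat set \<Rightarrow> real \<Rightarrow>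
    (((nat \<times> nat) set \<times> nat set) \<times> (nat \<times> nat \<Rightarrow> nat \<times> nat) \<times> (nat \<times> nat \<Rightarrow> nat \<times> nat)) set" where
  "codes n r U s = (SIGMA (I, T) : (SIGMA I : Pow (half_edges_at r U). boundary_candidates n r U s I).
     matchings I \<times> ((half_edges_at r U - I) \<rightarrow>\<^sub>E (T \<times> {..<r})))"

fun decode :: "('a set \<times> 'b) \<times> ('a \<Rightarrow> 'a) \<times> ('a \<Rightarrow> 'a) \<Rightarrow> 'a \<Rightarrow> 'a" where
  "decode ((I, T), (p, h)) x = (if x \<in> I then p x else h x)"

definition pairings_with_code ::
    "nat \<Rightarrow> nat \<Rightarrow> nat set \<Rightarrow> ((nat \<times> nat) set \<times> nat set) \<times> (nat \<times> nat \<Rightarrow> nat \<times> nat) \<times> (nat \<times> nat \<Rightarrow> nat \<times> nat)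
       \<Rightarrow> (nat \<times> nat \<Rightarrow> nat \<times> nat) set" where
  "pairings_with_code n r U c =
     {f \<in> matchings (half_edges n r). \<forall>x \<in> half_edges_at r U. f x = decode c x}"

lemma small_boundary_subset_codes:
  assumes U: "U \<subseteq> {1..n}"
  shows "matchings (half_edges n r) \<inter> {f. real (card (boundary n r f U)) \<le> s}
           \<subseteq> (\<Union>c\<in>codes n r U s. pairings_with_code n r U c)"
proof
  fix f assume f: "f \<in> matchings (half_edges n r) \<inter> {f. real (card (boundary n r f U)) \<le> s}"
  let ?S = "half_edges n r" and ?X = "half_edges_at r U"
  have fP: "f \<in> matchings ?S" using f by simp
  note fS = matchingsD[OF fP]
  have XS: "?X \<subseteq> ?S" using half_edges_at_subset[OF U] .
  have finX: "finite ?X" using finite_subset[OF XS] unfolding half_edges_def by simp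
  define I where "I = {x \<in> ?X. f x \<in> ?X}"
  define T where "T = fst ` f ` (?X - I)"
  have p: "restrict f I \<in> matchings I"
    using fS XS unfolding I_def matchings_def by auto
  have h: "restrict f (?X - I) \<in> (?X - I) \<rightarrow>\<^sub>E (T \<times> {..<r})"
  proof -
    have "f x \<in> T \<times> {..<r}" if x: "x \<in> ?X - I" for x
      using fS[of x] x XS unfolding T_def half_edges_def by (cases "f x") force
    then show ?thesis by auto
  qed
  have Tb: "T \<subseteq> boundary n r f U"
  proof
    fix y assume "y \<in> T"
    then obtain x where x: "x \<in> ?X - I" and y: "y = fst (f x)" unfolding T_def by auto
    obtain u i where xu: "x = (u, i)" and u: "u \<in> U" and i: "i < r"
      using x unfolding half_edges_at_def by auto
    obtain j where fx: "f x = (y, j)" "j < r" "y \<in> {1..n}"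
      using fS[of x] x XS y unfolding half_edges_def by (cases "f x") auto
    have "y \<notin> U" using x fx unfolding I_def half_edges_at_def by auto
    moreover have "adj r f y u" unfolding adj_def using i fx xu by auto
    ultimately show "y \<in> boundary n r f U" unfolding boundary_def using fx u by auto
  qed
  have "card T \<le> card (?X - I)" unfolding T_def using finX
    by (meson card_image_le finite_Diff finite_imageI le_trans)
  moreover have "card T \<le> card (boundary n r f U)"
    by (rule card_mono[OF _ Tb]) (auto simp: boundary_def)
  ultimately have "((I, T), (restrict f I, restrict f (?X - I))) \<in> codes n r U s"
    using Tb p h f unfolding codes_def boundary_candidates_def boundary_def I_def by auto
  moreover have "f \<in> pairings_with_code n r U ((I, T), (restrict f I, restrict f (?X - I)))"
    unfolding pairings_with_code_def using f by auto
  ultimately show "f \<in> (\<Union>c\<in>codes n r U s. pairings_with_code n r U c)" by blast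
qed

lemma card_half_edges_at_Un_partners:
  assumes c: "((I, T), (p, h)) \<in> codes n r U s" and f0: "f0 \<in> matchings (half_edges n r)"
    and U: "U \<subseteq> {1..n}" and agree: "\<forall>x \<in> half_edges_at r U. f0 x = decode ((I, T), (p, h)) x"
  shows "card (half_edges_at r U \<union> f0 ` half_edges_at r U)
           = card (half_edges_at r U) + card (half_edges_at r U - I)"
proof -
  let ?X = "half_edges_at r U"
  have XS: "?X \<subseteq> half_edges n r" using half_edges_at_subset[OF U] .
  have finX: "finite ?X" using finite_subset[OF XS] unfolding half_edges_def by simp
  have IX: "I \<subseteq> ?X" and TU: "T \<subseteq> {1..n} - U" and p: "p \<in> matchings I"
    and h: "h \<in> (?X - I) \<rightarrow>\<^sub>E (T \<times> {..<r})"
    using c unfolding codes_def boundary_candidates_def by auto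
  have "f0 x \<in> ?X" if "x \<in> I" for x
  proof -
    have "f0 x = p x" using agree IX that by auto
    then show ?thesis using IX matchingsD[OF p that] by auto
  qed
  then have "f0 ` I \<subseteq> ?X" by blast
  then have "?X \<union> f0 ` ?X = ?X \<union> f0 ` (?X - I)" by blast
  moreover have "f0 x \<notin> ?X" if "x \<in> ?X - I" for x
  proof -
    have "f0 x \<in> T \<times> {..<r}" using agree h that by auto
    then show ?thesis using TU unfolding half_edges_at_def by auto
  qed
  then have "f0 ` (?X - I) \<inter> ?X = {}" by blast
  moreover have "inj_on f0 (?X - I)"
    using XS by (intro inj_onI) (metis Diff_iff matchingsD[OF f0] subsetD)
  ultimately show ?thesis using finX by (simp add: card_Un_disjoint card_image Int_commute)
qed

lemma card_pairings_with_code_le: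
  assumes U: "U \<subseteq> {1..n}" and ev: "even (n * r)" and L: "2 * card (half_edges_at r U) < n * r"
    and c: "((I, T), (p, h)) \<in> codes n r U s"
  shows "real (card (pairings_with_code n r U ((I, T), (p, h))))
           \<le> real (card (matchings (half_edges n r)))
             * (1 / (real (n * r) - 2 * real (card (half_edges_at r U))))
               ^ ((card (half_edges_at r U) + card (half_edges_at r U - I)) div 2)"
proof (cases "pairings_with_code n r U ((I, T), (p, h)) = {}")
  case True
  have "real (2 * card (half_edges_at r U)) < real (n * r)" using L by (rule of_nat_less_iff[THEN iffD2])
  then show ?thesis using True by simp
next
  case False
  let ?S = "half_edges n r" and ?X = "half_edges_at r U"
  obtain f0 where f0: "f0 \<in> pairings_with_code n r U ((I, T), (p, h))" using False by blast
  then have f0S: "f0 \<in> matchings ?S" and agree: "\<forall>x \<in> ?X. f0 x = decode ((I, T), (p, h)) x"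
    unfolding pairings_with_code_def by auto
  have XS: "?X \<subseteq> ?S" using half_edges_at_subset[OF U] .
  have "pairings_with_code n r U ((I, T), (p, h)) = {f \<in> matchings ?S. \<forall>x\<in>?X. f x = f0 x}"
    using agree unfolding pairings_with_code_def by auto
  then have "card (pairings_with_code n r U ((I, T), (p, h)))
               = num_matchings (n * r - (card ?X + card (?X - I)))"
    using card_matchings_agreeing[OF _ XS f0S] card_half_edges_at_Un_partners[OF c f0S U agree]
    by (simp add: card_half_edges half_edges_def)
  also have "real \<dots> \<le> real (num_matchings (n * r))
      * (1 / (real (n * r) - real (2 * card ?X))) ^ ((card ?X + card (?X - I)) div 2)"
    using ev L card_mono[of ?X "?X - I"] finite_subset[OF XS]
    by (intro num_matchings_diff_le) (auto simp: half_edges_def)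
  finally show ?thesis
    by (simp add: card_matchings card_half_edges half_edges_def)
qed

lemma finite_boundary_candidates: "finite (boundary_candidates n r U s I)"
  by (rule finite_subset[of _ "Pow {1..n}"]) (auto simp: boundary_candidates_def)

lemma finite_code_fiber:
  fixes T :: "nat set" and r :: nat
  assumes "finite X" "I \<subseteq> X" "T \<subseteq> {1..n}"
  shows "finite (matchings I \<times> ((X - I) \<rightarrow>\<^sub>E (T \<times> {..<r})))"
proof -
  have "finite I" "finite T"
    using finite_subset[OF assms(2,1)] finite_subset[OF assms(3)] by simp_all
  then show ?thesis
    using assms(1) by (intro finite_cartesian_product finite_matchings finite_PiE) simp_all
qed

lemma finite_codes:
  assumes "finite U"
  shows "finite (codes n r U s)"
  unfolding codes_def
proof (rule finite_SigmaI)
  have finX: "finite (half_edges_at r U)" using assms by (rule finite_half_edges_at)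
  then show "finite (SIGMA I : Pow (half_edges_at r U). boundary_candidates n r U s I)"
    by (intro finite_SigmaI finite_boundary_candidates) simp
  fix IT assume "IT \<in> (SIGMA I : Pow (half_edges_at r U). boundary_candidates n r U s I)"
  then show "finite (case IT of (I, T) \<Rightarrow> matchings I \<times> ((half_edges_at r U - I) \<rightarrow>\<^sub>E (T \<times> {..<r})))"
    using finX by (auto intro!: finite_code_fiber[where n = n] simp: boundary_candidates_def)
qed

lemma card_small_boundary_le:
  assumes U: "U \<subseteq> {1..n}" and ev: "even (n * r)" and L: "2 * card (half_edges_at r U) < n * r"
  shows "real (card (matchings (half_edges n r) \<inter> {f. real (card (boundary n r f U)) \<le> s}))
     \<le> real (card (matchings (half_edges n r))) * (\<Sum>((I, T), ph) \<in> codes n r U s.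
          (1 / (real (n * r) - 2 * real (card (half_edges_at r U))))
            ^ ((card (half_edges_at r U) + card (half_edges_at r U - I)) div 2))"
proof -
  have finU: "finite U" using U finite_subset by blast
  have "card (matchings (half_edges n r) \<inter> {f. real (card (boundary n r f U)) \<le> s})
      \<le> card (\<Union>c\<in>codes n r U s. pairings_with_code n r U c)"
    by (intro card_mono small_boundary_subset_codes[OF U] finite_UN_I finite_codes[OF finU])
       (auto simp: pairings_with_code_def finite_matchings half_edges_def)
  also have "\<dots> \<le> (\<Sum>c\<in>codes n r U s. card (pairings_with_code n r U c))"
    by (rule card_UN_le[OF finite_codes[OF finU]])
  finally have "real (card (matchings (half_edges n r) \<inter> {f. real (card (boundary n r f U)) \<le> s}))
      \<le> (\<Sum>c\<in>codes n r U s. real (card (pairings_with_code n r U c)))"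
    by (metis of_nat_le_iff of_nat_sum)
  also have "\<dots> \<le> (\<Sum>((I, T), ph) \<in> codes n r U s. real (card (matchings (half_edges n r)))
      * (1 / (real (n * r) - 2 * real (card (half_edges_at r U))))
          ^ ((card (half_edges_at r U) + card (half_edges_at r U - I)) div 2))"
    using card_pairings_with_code_le[OF U ev L] by (intro sum_mono) (auto split: prod.splits)
  finally show ?thesis by (simp add: sum_distrib_left case_prod_beta)
qed

lemma sum_codes:
  fixes g :: "(nat \<times> nat) set \<Rightarrow> real"
  assumes "finite U"
  shows "(\<Sum>((I, T), ph) \<in> codes n r U s. g I)
    = (\<Sum>I\<in>Pow (half_edges_at r U). \<Sum>T\<in>boundary_candidates n r U s I.
         real (num_matchings (card I)) * (real (card T) * real r) ^ card (half_edges_at r U - I) * g I)"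
proof -
  let ?X = "half_edges_at r U"
  have finX: "finite ?X" using assms by (rule finite_half_edges_at)
  let ?A = "SIGMA I : Pow ?X. boundary_candidates n r U s I"
  let ?B = "\<lambda>IT. matchings (fst IT) \<times> ((?X - fst IT) \<rightarrow>\<^sub>E (snd IT \<times> {..<r}))"
  have "finite (?B IT)" if "IT \<in> ?A" for IT
    using that finX by (intro finite_code_fiber[where n = n]) (auto simp: boundary_candidates_def)
  then have "(\<Sum>((I, T), ph) \<in> codes n r U s. g I) = (\<Sum>IT\<in>?A. \<Sum>ph\<in>?B IT. g (fst IT))"
    using sum.Sigma[of ?A ?B "\<lambda>IT ph. g (fst IT)"] finX finite_boundary_candidates
    by (simp add: codes_def split_def)
  also have "\<dots> = (\<Sum>(I, T)\<in>?A.
      real (num_matchings (card I)) * (real (card T) * real r) ^ card (?X - I) * g I)"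
  proof (rule sum.cong[OF refl])
    fix IT assume IT: "IT \<in> ?A"
    obtain I T where IT_eq: "IT = (I, T)" by fastforce
    have "finite I" "finite T"
      using IT finX finite_subset unfolding IT_eq boundary_candidates_def by auto
    then show "(\<Sum>ph\<in>?B IT. g (fst IT))
        = (case IT of (I, T) \<Rightarrow> real (num_matchings (card I)) * (real (card T) * real r) ^ card (?X - I) * g I)"
      using finX by (simp add: IT_eq card_cartesian_product card_matchings card_PiE)
  qed
  also have "\<dots> = (\<Sum>I\<in>Pow ?X. \<Sum>T\<in>boundary_candidates n r U s I.
      real (num_matchings (card I)) * (real (card T) * real r) ^ card (?X - I) * g I)"
    using finX by (subst sum.Sigma) (auto simp: finite_boundary_candidates split_def)
  finally show ?thesis .
qed

lemma card_boundary_candidates_of_card: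
  "card {T \<in> boundary_candidates n r U s I. card T = t} \<le> n choose t"
proof -
  have "card {T \<in> boundary_candidates n r U s I. card T = t} \<le> card {T. T \<subseteq> {1..n} \<and> card T = t}"
    by (rule card_mono) (auto simp: boundary_candidates_def)
  then show ?thesis by (simp add: n_subsets)
qed

lemma sum_boundary_candidates_le:
  fixes n m r :: nat and \<eta> :: real and U :: "nat set"
  assumes m: "1 \<le> m" and mn: "4 * m \<le> n" and r: "1 \<le> r" and U: "U \<subseteq> {1..n}" and cU: "card U = m"
    and I: "I \<subseteq> half_edges_at r U"
  defines "s \<equiv> (real r - 2 - \<eta>) * real m"
    and "B \<equiv> (2 * exp 1 * real r) ^ (m * r) * (real m / real n) powr ((1 + \<eta> / 2) * real m)"
  shows "(\<Sum>T\<in>boundary_candidates n r U s I.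
            real (num_matchings (card I)) * (real (card T) * real r) ^ card (half_edges_at r U - I)
            * (1 / (real (n * r) - 2 * real (m * r))) ^ ((m * r + card (half_edges_at r U - I)) div 2))
         \<le> real (m * r + 1) * B"
proof -
  let ?C = "boundary_candidates n r U s I" and ?a = "card (half_edges_at r U - I)"
  let ?G = "\<lambda>t. real (num_matchings (card I)) * (real t * real r) ^ ?a
            * (1 / (real (n * r) - 2 * real (m * r))) ^ ((m * r + ?a) div 2)"
  have finU: "finite U" using U finite_subset by blast
  then have finX: "finite (half_edges_at r U)" by (rule finite_half_edges_at)
  have "card I \<le> card (half_edges_at r U)" using I finX by (rule card_mono[rotated])
  then have cIa: "card I + ?a = m * r"
    using I finX card_half_edges_at[OF finU, of r] cU by (simp add: card_Diff_subset finite_subset)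
  have B0: "0 \<le> B" unfolding B_def by simp
  have size_t: "real (card {T \<in> ?C. card T = t}) * ?G t \<le> B" for t
  proof (cases "{T \<in> ?C. card T = t} = {} \<or> odd (card I)")
    case True
    then show ?thesis
    proof
      assume "{T \<in> ?C. card T = t} = {}"
      then show ?thesis using B0 by (simp only: card.empty)
    qed (use B0 in \<open>simp add: num_matchings_odd\<close>)
  next
    case False
    then obtain T b where T: "T \<in> ?C" "card T = t" and b: "card I = 2 * b" by blast
    have "t \<le> ?a" "real t \<le> s" using T unfolding boundary_candidates_def by auto
    then have "real (n choose t) * ?G t \<le> B"
      unfolding B_def b s_def using code_weight_le[OF m mn r, of b ?a t \<eta>] cIa b
      by (simp add: mult.assoc)
    moreover have "0 \<le> ?G t" using inverse_gap_le(1)[OF m mn r] by simp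
    ultimately show ?thesis
      using card_boundary_candidates_of_card[of n r U s I t]
      by (meson mult_right_mono of_nat_le_iff order_trans)
  qed
  have "(\<Sum>T\<in>?C. ?G (card T)) = (\<Sum>t\<le>m * r. \<Sum>T\<in>{T \<in> ?C. card T = t}. ?G (card T))"
    using cIa by (intro sum.group[symmetric] finite_boundary_candidates) (auto simp: boundary_candidates_def)
  also have "\<dots> = (\<Sum>t\<le>m * r. real (card {T \<in> ?C. card T = t}) * ?G t)"
    by simp
  also have "\<dots> \<le> (\<Sum>t\<le>m * r. B)" by (intro sum_mono size_t)
  finally show ?thesis by simp
qed

lemma sum_codes_weight_le:
  fixes n m r :: nat and \<eta> :: real and U :: "nat set"
  assumes m: "1 \<le> m" and mn: "4 * m \<le> n" and r: "1 \<le> r" and U: "U \<subseteq> {1..n}" and cU: "card U = m"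
  defines "s \<equiv> (real r - 2 - \<eta>) * real m"
    and "B \<equiv> (2 * exp 1 * real r) ^ (m * r) * (real m / real n) powr ((1 + \<eta> / 2) * real m)"
  shows "(\<Sum>((I, T), ph) \<in> codes n r U s.
            (1 / (real (n * r) - 2 * real (m * r))) ^ ((m * r + card (half_edges_at r U - I)) div 2))
         \<le> 2 ^ (m * r) * real (m * r + 1) * B"
proof -
  let ?X = "half_edges_at r U"
  have finU: "finite U" using U finite_subset by blast
  have "(\<Sum>((I, T), ph) \<in> codes n r U s.
           (1 / (real (n * r) - 2 * real (m * r))) ^ ((m * r + card (?X - I)) div 2))
      = (\<Sum>I\<in>Pow ?X. \<Sum>T\<in>boundary_candidates n r U s I. real (num_matchings (card I))
           * (real (card T) * real r) ^ card (?X - I)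
           * (1 / (real (n * r) - 2 * real (m * r))) ^ ((m * r + card (?X - I)) div 2))"
    by (rule sum_codes[OF finU])
  also have "\<dots> \<le> (\<Sum>I\<in>Pow ?X. real (m * r + 1) * B)"
    using sum_boundary_candidates_le[OF m mn r U cU] unfolding s_def B_def by (intro sum_mono) simp
  also have "\<dots> = 2 ^ (m * r) * real (m * r + 1) * B"
    using finU cU by (simp add: card_Pow card_half_edges_at finite_half_edges_at)
  finally show ?thesis .
qed

lemma prob_small_boundary_le:
  fixes n m r :: nat and \<eta> :: real and U :: "nat set"
  assumes r: "1 \<le> r" and ev: "even (r * n)" and m: "1 \<le> m" and mn: "4 * m \<le> n"
    and U: "U \<subseteq> {1..n}" and cU: "card U = m" and eta: "\<eta> \<ge> 0"
  shows "measure_pmf.prob (config_model n r)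
           {f. real (card (boundary n r f U)) \<le> (real r - 2 - \<eta>) * real (card U)}
         \<le> exp (- (1 + \<eta> / 4) * real m * ln (real n / real m) + (real r * (2 + ln (4 * real r))) * real m)"
proof -
  define s where "s = (real r - 2 - \<eta>) * real m"
  define B where "B = (2 * exp 1 * real r) ^ (m * r) * (real m / real n) powr ((1 + \<eta> / 2) * real m)"
  let ?P = "matchings (half_edges n r)" and ?E = "{f. real (card (boundary n r f U)) \<le> s}"
  have finU: "finite U" using U finite_subset by blast
  have cX: "card (half_edges_at r U) = m * r" using card_half_edges_at[OF finU] cU by simp
  have L: "2 * card (half_edges_at r U) < n * r" using m mn r cX by simp
  have finP: "finite ?P" by (simp add: finite_matchings half_edges_def)
  have cP: "real (card ?P) > 0"
    using num_matchings_pos[of "n * r"] ev by (simp add: card_matchings card_half_edges half_edges_def mult.commute)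
  have "real (card ?P) * (\<Sum>((I, T), ph) \<in> codes n r U s.
           (1 / (real (n * r) - 2 * real (m * r))) ^ ((m * r + card (half_edges_at r U - I)) div 2))
      \<le> real (card ?P) * (2 ^ (m * r) * real (m * r + 1) * B)"
    using sum_codes_weight_le[OF m mn r U cU, of \<eta>] cP unfolding s_def B_def
    by (intro mult_left_mono) simp_all
  then have "real (card (?P \<inter> ?E)) \<le> real (card ?P) * (2 ^ (m * r) * real (m * r + 1) * B)"
    using card_small_boundary_le[OF U _ L, of s] ev cX by (simp add: mult.commute)
  moreover have "measure_pmf.prob (config_model n r) ?E = real (card (?P \<inter> ?E)) / real (card ?P)"
    unfolding config_model_def pairings_eq_matchings using cP finP
    by (subst measure_pmf_of_set) (auto simp: Int_commute)
  ultimately have "measure_pmf.prob (config_model n r) ?E \<le> 2 ^ (m * r) * real (m * r + 1) * B"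
    using cP by (simp add: pos_divide_le_eq mult.commute)
  also have "\<dots> \<le> exp (- (1 + \<eta> / 4) * real m * ln (real n / real m) + (real r * (2 + ln (4 * real r))) * real m)"
    using union_bound_le_exp[of m n r \<eta>] m mn r eta unfolding B_def by (simp add: mult.assoc)
  finally show ?thesis unfolding s_def cU .
qed

theorem lemma5:
  fixes r :: nat
  assumes "r \<ge> 3"
  shows "\<exists>C7 D :: real. \<exists>eps5 :: real \<Rightarrow> real. (\<forall>\<eta>>0. eps5 \<eta> > 0) \<and>
    (\<forall>\<eta>>0. \<exists>N. \<forall>n \<ge> N. even (r * n) \<longrightarrow>
      (\<forall>m::nat. 1 \<le> m \<longrightarrow> real m \<le> eps5 \<eta> * real n \<longrightarrow>
        (\<forall>U. U \<subseteq> {1..n} \<longrightarrow> card U = m \<longrightarrow>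
           measure_pmf.prob (config_model n r)
             {f. real (card (boundary n r f U)) \<le> (real r - 2 - \<eta>) * real (card U)}
           \<le> C7 * exp (- (1 + \<eta> / 4) * real m * ln (real n / real m) + D * real m))))"
proof -
  have "measure_pmf.prob (config_model n r)
      {f. real (card (boundary n r f U)) \<le> (real r - 2 - \<eta>) * real (card U)}
    \<le> exp (- (1 + \<eta> / 4) * real m * ln (real n / real m) + real r * (2 + ln (4 * real r)) * real m)"
    if "\<eta> > 0" "even (r * n)" "1 \<le> m" "real m \<le> 1 / 4 * real n" "U \<subseteq> {1..n}" "card U = m"
    for \<eta> n m U
    using prob_small_boundary_le[of r n m U \<eta>] that assms by simp
  then show ?thesis
    by (intro exI[of _ 1] exI[of _ "real r * (2 + ln (4 * real r))"] exI[of _ "\<lambda>_. 1 / 4"])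
      (auto intro: exI[of _ 0])
qed

end
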